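(* Let $G$ be a discrete group and let $X$ be a $G$-boundary such that the action of $G$ on $X$ is not topologically free. Then for every $x\in X$ and every $t_1,\dots,t_n\in G$, the subgroup $\bigcap_{i=1}^n t_iG_xt_i^{-1}$ is non-trivial, where $G_x$ is the stabilizer of $x$. If moreover $G$ has no non-trivial finite normal subgroup, then this intersection is infinite.
   Context: A compact Hausdorff $G$-space $X$ is a $G$-boundary if the action is minimal (every orbit dense) and strongly proximal (for every pair of Borel probability measures $\mu,\nu$ on $X$ there is a net $t_i\in G$ with $\lim t_i\mu=\lim t_i\nu$ weak* ). The action is topologically free if for every $s\in G\setminus\{e\}$ the fixed point set $\{x: sx=x\}$ has empty interior. $G_x=\{s\in G: sx=x\}$. *)

theory Defs
  imports "HOL-Probability.Probability" "HOL-Algebra.Group_Action"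
begin

definition continuous_action :: "('g, 'm) monoid_scheme \<Rightarrow> ('g \<Rightarrow> 'x::topological_space \<Rightarrow> 'x) \<Rightarrow> bool" where
  "continuous_action G \<phi> \<longleftrightarrow> group G \<and> group_action G UNIV \<phi> \<and>
     (\<forall>g \<in> carrier G. continuous_on UNIV (\<phi> g))"

definition borel_prob :: "'x::topological_space measure \<Rightarrow> bool" where
  "borel_prob \<mu> \<longleftrightarrow> prob_space \<mu> \<and> sets \<mu> = sets borel"

definition push_meas :: "('g \<Rightarrow> 'x::topological_space \<Rightarrow> 'x) \<Rightarrow> 'g \<Rightarrow> 'x measure \<Rightarrow> 'x measure" where
  "push_meas \<phi> g \<mu> = distr \<mu> borel (\<phi> g)"

definition minimal_action :: "('g, 'm) monoid_scheme \<Rightarrow> ('g \<Rightarrow> 'x::topological_space \<Rightarrow> 'x) \<Rightarrow> bool" where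
  "minimal_action G \<phi> \<longleftrightarrow> (\<forall>x. closure (orbit G \<phi> x) = UNIV)"

text \<open>Strong proximality: for all Borel probability measures \<mu>, \<nu> there is a net (here: a proper
  filter F on G concentrated on carrier G) along which g\<mu> and g\<nu> both converge weak* to the same
  limit L (a functional on C(X)).\<close>
definition strongly_proximal :: "('g, 'm) monoid_scheme \<Rightarrow> ('g \<Rightarrow> 'x::topological_space \<Rightarrow> 'x) \<Rightarrow> bool" where
  "strongly_proximal G \<phi> \<longleftrightarrow>
     (\<forall>\<mu> \<nu>. borel_prob \<mu> \<longrightarrow> borel_prob \<nu> \<longrightarrow>
        (\<exists>F L. F \<noteq> bot \<and> eventually (\<lambda>g. g \<in> carrier G) F \<and>
           (\<forall>f::'x \<Rightarrow> real. continuous_on UNIV f \<longrightarrow>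
              ((\<lambda>g. integral\<^sup>L (push_meas \<phi> g \<mu>) f) \<longlongrightarrow> L f) F \<and>
              ((\<lambda>g. integral\<^sup>L (push_meas \<phi> g \<nu>) f) \<longlongrightarrow> L f) F)))"

definition G_boundary :: "('g, 'm) monoid_scheme \<Rightarrow> ('g \<Rightarrow> 'x::t2_space \<Rightarrow> 'x) \<Rightarrow> bool" where
  "G_boundary G \<phi> \<longleftrightarrow> compact (UNIV :: 'x set) \<and> continuous_action G \<phi> \<and>
     minimal_action G \<phi> \<and> strongly_proximal G \<phi>"

definition topologically_free :: "('g, 'm) monoid_scheme \<Rightarrow> ('g \<Rightarrow> 'x::topological_space \<Rightarrow> 'x) \<Rightarrow> bool" where
  "topologically_free G \<phi> \<longleftrightarrow>
     (\<forall>s \<in> carrier G. s \<noteq> \<one>\<^bsub>G\<^esub> \<longrightarrow> interior {x. \<phi> s x = x} = {})"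

end

theory Submission
  imports Defs
begin

text \<open>If s \<noteq> 1 fixes a nonempty open set U, then every finite set Y can be moved into U by some g:
  strong proximality, applied to the uniform measure on Y and a point mass, gives a net along which
  all points of gY converge to one point w, and minimality moves w into U. Then g\<inverse>sg \<noteq> 1 fixes
  Y pointwise. The intersection of the conjugates t G_x t\<inverse> is the pointwise stabilizer of
  the finite set of the points t x. If it were finite, a finite Y containing them in the orbit of x whose pointwise
  stabilizer has least cardinality would have the same pointwise stabilizer as the whole orbit: a
  finite normal subgroup, which is nontrivial by the above.\<close>

definition pointwise_stabilizer :: "('a, 'm) monoid_scheme \<Rightarrow> ('a \<Rightarrow> 'b \<Rightarrow> 'b) \<Rightarrow> 'b set \<Rightarrow> 'a set"
  where "pointwise_stabilizer G \<phi> Y = {g \<in> carrier G. \<forall>y\<in>Y. \<phi> g y = y}"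

lemma pointwise_stabilizer_antimono:
  "Y \<subseteq> Y' \<Longrightarrow> pointwise_stabilizer G \<phi> Y' \<subseteq> pointwise_stabilizer G \<phi> Y"
  by (auto simp: pointwise_stabilizer_def)

lemma INT_stabilizer_eq_pointwise_stabilizer:
  "I \<noteq> {} \<Longrightarrow> (\<Inter>i\<in>I. stabilizer G \<phi> (f i)) = pointwise_stabilizer G \<phi> (f ` I)"
  by (auto simp: stabilizer_def pointwise_stabilizer_def)

text \<open>Take Y of least pointwise-stabilizer cardinality; adding any further point of Z cannot shrink it.\<close>
lemma pointwise_stabilizer_finite_subset:
  assumes "finite Y\<^sub>0" "Y\<^sub>0 \<subseteq> Z" "finite (pointwise_stabilizer G \<phi> Y\<^sub>0)"
  obtains Y where "finite Y" "Y\<^sub>0 \<subseteq> Y" "Y \<subseteq> Z" "pointwise_stabilizer G \<phi> Y = pointwise_stabilizer G \<phi> Z"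
proof -
  define P where "P Y \<longleftrightarrow> finite Y \<and> Y\<^sub>0 \<subseteq> Y \<and> Y \<subseteq> Z" for Y
  obtain Y where "P Y" and least: "\<And>Y'. P Y' \<Longrightarrow> card (pointwise_stabilizer G \<phi> Y) \<le> card (pointwise_stabilizer G \<phi> Y')"
    using ex_has_least_nat[of P Y\<^sub>0 "\<lambda>Y. card (pointwise_stabilizer G \<phi> Y)"] assms by (auto simp: P_def)
  have fin: "finite (pointwise_stabilizer G \<phi> Y)"
    using \<open>P Y\<close> assms(3) pointwise_stabilizer_antimono finite_subset by (metis P_def)
  have "pointwise_stabilizer G \<phi> (insert z Y) = pointwise_stabilizer G \<phi> Y" if "z \<in> Z" for z
  proof (rule card_subset_eq[OF fin])
    show sub: "pointwise_stabilizer G \<phi> (insert z Y) \<subseteq> pointwise_stabilizer G \<phi> Y"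
      by (rule pointwise_stabilizer_antimono) auto
    have "P (insert z Y)" using \<open>P Y\<close> that by (auto simp: P_def)
    then show "card (pointwise_stabilizer G \<phi> (insert z Y)) = card (pointwise_stabilizer G \<phi> Y)"
      using least card_mono[OF fin sub] by (meson le_antisym)
  qed
  then have "pointwise_stabilizer G \<phi> Y = pointwise_stabilizer G \<phi> Z"
    using \<open>P Y\<close> by (auto simp: pointwise_stabilizer_def P_def)
  with \<open>P Y\<close> that show ?thesis by (auto simp: P_def)
qed

sublocale group_action \<subseteq> group G
  using group_hom group_hom.axioms(1) by blast

context group_action
begin

lemma action_inv_left: "g \<in> carrier G \<Longrightarrow> y \<in> E \<Longrightarrow> \<phi> (inv g) (\<phi> g y) = y"
  using orbit_sym_aux by blast

lemma action_inv_right: "g \<in> carrier G \<Longrightarrow> y \<in> E \<Longrightarrow> \<phi> g (\<phi> (inv g) y) = y"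
  using orbit_sym_aux[of "inv g" y] by simp

lemma image_orbit:
  assumes g: "g \<in> carrier G" and x: "x \<in> E"
  shows "\<phi> g ` orbit G \<phi> x = orbit G \<phi> x"
proof (intro equalityI subsetI)
  fix y assume "y \<in> \<phi> g ` orbit G \<phi> x"
  then obtain a where a: "a \<in> carrier G" and y: "y = \<phi> g (\<phi> a x)"
    by (auto simp: orbit_def)
  then have "y = \<phi> (g \<otimes> a) x" using composition_rule[OF x g a] by simp
  then show "y \<in> orbit G \<phi> x" using a g by (auto simp: orbit_def)
next
  fix y assume "y \<in> orbit G \<phi> x"
  then obtain a where a: "a \<in> carrier G" and y: "y = \<phi> a x"
    by (auto simp: orbit_def)
  have "y = \<phi> g (\<phi> (inv g) y)"
    using action_inv_right[OF g] element_image[OF a x y[symmetric]] by simp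
  moreover have "\<phi> (inv g) y = \<phi> (inv g \<otimes> a) x" using composition_rule[OF x _ a] g y by simp
  then have "\<phi> (inv g) y \<in> orbit G \<phi> x" using a g by (auto simp: orbit_def)
  ultimately show "y \<in> \<phi> g ` orbit G \<phi> x" by (rule image_eqI)
qed

lemma pointwise_stabilizer_subgroup:
  assumes "Y \<subseteq> E" shows "subgroup (pointwise_stabilizer G \<phi> Y) G"
proof (cases "Y = {}")
  case True
  then show ?thesis
    using subgroup_self by (simp add: pointwise_stabilizer_def)
next
  case False
  then have "pointwise_stabilizer G \<phi> Y = \<Inter> (stabilizer G \<phi> ` Y)"
    using INT_stabilizer_eq_pointwise_stabilizer[of Y G \<phi> id] by simp
  then show ?thesis
    using False assms stabilizer_subgroup by (auto intro!: subgroups_Inter)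
qed

lemma pointwise_stabilizer_image:
  assumes g: "g \<in> carrier G" and Y: "Y \<subseteq> E"
  shows "pointwise_stabilizer G \<phi> (\<phi> g ` Y) = g <# pointwise_stabilizer G \<phi> Y #> inv g"
proof (intro equalityI subsetI)
  fix k assume k: "k \<in> pointwise_stabilizer G \<phi> (\<phi> g ` Y)"
  then have kc: "k \<in> carrier G" by (simp add: pointwise_stabilizer_def)
  have "\<phi> (inv g \<otimes> k \<otimes> g) y = y" if y: "y \<in> Y" for y
  proof -
    have yE: "y \<in> E" using y Y by blast
    have "\<phi> (inv g \<otimes> k \<otimes> g) y = \<phi> (inv g) (\<phi> k (\<phi> g y))"
      using g kc yE element_image[OF g yE refl] by (simp add: composition_rule)
    also have "\<dots> = y" using k y g yE by (simp add: pointwise_stabilizer_def action_inv_left)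
    finally show ?thesis .
  qed
  then have "inv g \<otimes> k \<otimes> g \<in> pointwise_stabilizer G \<phi> Y"
    using g kc by (simp add: pointwise_stabilizer_def)
  moreover have "k = g \<otimes> (inv g \<otimes> k \<otimes> g) \<otimes> inv g"
    using g kc by (simp add: m_assoc[symmetric]) (simp add: m_assoc)
  ultimately show "k \<in> g <# pointwise_stabilizer G \<phi> Y #> inv g"
    unfolding l_coset_def r_coset_def by blast
next
  fix k assume "k \<in> g <# pointwise_stabilizer G \<phi> Y #> inv g"
  then obtain h where h: "h \<in> pointwise_stabilizer G \<phi> Y" and k: "k = g \<otimes> h \<otimes> inv g"
    unfolding l_coset_def r_coset_def by auto
  have hc: "h \<in> carrier G" using h by (simp add: pointwise_stabilizer_def)
  have "\<phi> k (\<phi> g y) = \<phi> g y" if y: "y \<in> Y" for y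
  proof -
    have yE: "y \<in> E" using y Y by blast
    have "\<phi> k (\<phi> g y) = \<phi> g (\<phi> h (\<phi> (inv g) (\<phi> g y)))"
      using g hc yE element_image[OF g yE refl] element_image[OF inv_closed[OF g] element_image[OF g yE refl] refl]
      by (simp add: k composition_rule)
    also have "\<dots> = \<phi> g y" using h y g yE by (simp add: pointwise_stabilizer_def action_inv_left)
    finally show ?thesis .
  qed
  then show "k \<in> pointwise_stabilizer G \<phi> (\<phi> g ` Y)"
    using g hc k by (auto simp: pointwise_stabilizer_def)
qed

lemma stabilizer_conjugate:
  "g \<in> carrier G \<Longrightarrow> x \<in> E \<Longrightarrow> g <# stabilizer G \<phi> x #> inv g = stabilizer G \<phi> (\<phi> g x)"
  using pointwise_stabilizer_image[of g "{x}"] by (simp add: pointwise_stabilizer_def stabilizer_def)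

lemma INT_conjugate_stabilizers:
  assumes "I \<noteq> {}" "t ` I \<subseteq> carrier G" "x \<in> E"
  shows "(\<Inter>i\<in>I. t i <# stabilizer G \<phi> x #> inv (t i)) = pointwise_stabilizer G \<phi> ((\<lambda>i. \<phi> (t i) x) ` I)"
proof -
  have "(\<Inter>i\<in>I. t i <# stabilizer G \<phi> x #> inv (t i)) = (\<Inter>i\<in>I. stabilizer G \<phi> (\<phi> (t i) x))"
    using assms(2,3) by (intro INF_cong) (auto simp: stabilizer_conjugate)
  then show ?thesis using INT_stabilizer_eq_pointwise_stabilizer[OF assms(1)] by simp
qed

lemma pointwise_stabilizer_orbit_normal:
  assumes "x \<in> E" shows "pointwise_stabilizer G \<phi> (orbit G \<phi> x) \<lhd> G"
proof -
  have orb: "orbit G \<phi> x \<subseteq> E" using assms element_image by (auto simp: orbit_def)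
  show ?thesis
  proof (subst normal_inv_iff, intro conjI ballI)
    show "subgroup (pointwise_stabilizer G \<phi> (orbit G \<phi> x)) G"
      using pointwise_stabilizer_subgroup[OF orb] .
    fix g h assume g: "g \<in> carrier G" and h: "h \<in> pointwise_stabilizer G \<phi> (orbit G \<phi> x)"
    then have "g \<otimes> h \<otimes> inv g \<in> g <# pointwise_stabilizer G \<phi> (orbit G \<phi> x) #> inv g"
      unfolding l_coset_def r_coset_def by blast
    then show "g \<otimes> h \<otimes> inv g \<in> pointwise_stabilizer G \<phi> (orbit G \<phi> x)"
      using pointwise_stabilizer_image[OF g orb] image_orbit[OF g assms] by simp
  qed
qed

end

definition finite_uniform_measure :: "'x::topological_space set \<Rightarrow> 'x measure"
  where "finite_uniform_measure S = distr (measure_pmf (pmf_of_set S)) borel id"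

lemma borel_prob_finite_uniform_measure:
  "finite S \<Longrightarrow> S \<noteq> {} \<Longrightarrow> borel_prob (finite_uniform_measure S)"
  unfolding borel_prob_def finite_uniform_measure_def
  by (auto intro!: prob_space.prob_space_distr prob_space_measure_pmf)

lemma integral_push_finite_uniform_measure:
  fixes f :: "'x::topological_space \<Rightarrow> real"
  assumes "finite S" "S \<noteq> {}" "continuous_on UNIV f" "continuous_on UNIV (\<phi> g)"
  shows "integral\<^sup>L (push_meas \<phi> g (finite_uniform_measure S)) f = (\<Sum>y\<in>S. f (\<phi> g y)) / card S"
proof -
  have "\<phi> g \<in> borel_measurable borel" "f \<in> borel_measurable borel" "(\<lambda>y. f (\<phi> g y)) \<in> borel_measurable borel"
    using assms(3,4) continuous_on_compose2[OF assms(3,4)] by (auto intro: borel_measurable_continuous_onI)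
  then have "integral\<^sup>L (push_meas \<phi> g (finite_uniform_measure S)) f = integral\<^sup>L (measure_pmf (pmf_of_set S)) (\<lambda>y. f (\<phi> g y))"
    by (simp add: push_meas_def finite_uniform_measure_def integral_distr)
  also have "\<dots> = (\<Sum>y\<in>S. f (\<phi> g y)) / card S"
    using assms by (simp add: integral_pmf_of_set)
  finally show ?thesis .
qed

text \<open>Strong proximality applied to the uniform measure on S and the point mass at some z \<in> S: along
  the resulting net, the limit functional is evaluation at a cluster point w of the net g z.\<close>
lemma strongly_proximal_averages_tendsto_point:
  fixes \<phi> :: "'g \<Rightarrow> 'x::t2_space \<Rightarrow> 'x"
  assumes "compact (UNIV :: 'x set)" "strongly_proximal G \<phi>"
    and cont: "\<And>g. g \<in> carrier G \<Longrightarrow> continuous_on UNIV (\<phi> g)"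
    and S: "finite S" "S \<noteq> {}"
  obtains F w where "F \<noteq> bot" "eventually (\<lambda>g. g \<in> carrier G) F"
    "\<And>f. continuous_on UNIV f \<Longrightarrow> ((\<lambda>g. (\<Sum>y\<in>S. f (\<phi> g y)) / card S) \<longlongrightarrow> f w) F"
proof -
  obtain z where z: "z \<in> S" using S by auto
  obtain F L where F: "F \<noteq> bot" and carrier: "eventually (\<lambda>g. g \<in> carrier G) F"
    and lim: "\<And>f::'x \<Rightarrow> real. continuous_on UNIV f \<Longrightarrow>
       ((\<lambda>g. integral\<^sup>L (push_meas \<phi> g (finite_uniform_measure S)) f) \<longlongrightarrow> L f) F \<and>
       ((\<lambda>g. integral\<^sup>L (push_meas \<phi> g (finite_uniform_measure {z})) f) \<longlongrightarrow> L f) F"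
    using assms(2) borel_prob_finite_uniform_measure[OF S] borel_prob_finite_uniform_measure[of "{z}"]
    unfolding strongly_proximal_def by (metis empty_not_insert finite.emptyI finite.insertI)
  have average: "((\<lambda>g. (\<Sum>y\<in>T. f (\<phi> g y)) / card T) \<longlongrightarrow> L f) F"
    if "T = S \<or> T = {z}" "continuous_on UNIV f" for T f
  proof -
    have T: "finite T" "T \<noteq> {}" using that(1) S by auto
    have "\<forall>\<^sub>F g in F. integral\<^sup>L (push_meas \<phi> g (finite_uniform_measure T)) f = (\<Sum>y\<in>T. f (\<phi> g y)) / card T"
      using carrier by eventually_elim (simp add: integral_push_finite_uniform_measure T that(2) cont)
    moreover have "((\<lambda>g. integral\<^sup>L (push_meas \<phi> g (finite_uniform_measure T)) f) \<longlongrightarrow> L f) F"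
      using lim[OF that(2)] that(1) by blast
    ultimately show ?thesis by (rule tendsto_cong[THEN iffD1])
  qed
  obtain w where w: "inf (nhds w) (filtermap (\<lambda>g. \<phi> g z) F) \<noteq> bot"
    using assms(1) F filtermap_bot_iff[of "\<lambda>g. \<phi> g z" F] unfolding compact_filter by auto
  have L_eval: "L f = f w" if f: "continuous_on UNIV f" for f :: "'x \<Rightarrow> real"
  proof (rule tendsto_unique[OF w])
    have "(f \<longlongrightarrow> L f) (filtermap (\<lambda>g. \<phi> g z) F)"
      using average[of "{z}" f] f by (simp add: filterlim_filtermap)
    then show "(f \<longlongrightarrow> L f) (inf (nhds w) (filtermap (\<lambda>g. \<phi> g z) F))"
      by (rule tendsto_mono[rotated]) simp
    have "(f \<longlongrightarrow> f w) (nhds w)"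
      using f by (simp add: continuous_on_eq_continuous_at isCont_def tendsto_at_iff_tendsto_nhds)
    then show "(f \<longlongrightarrow> f w) (inf (nhds w) (filtermap (\<lambda>g. \<phi> g z) F))"
      by (rule tendsto_mono[rotated]) simp
  qed
  show ?thesis
  proof (rule that[OF F carrier])
    fix f :: "'x \<Rightarrow> real" assume "continuous_on UNIV f"
    then show "((\<lambda>g. (\<Sum>y\<in>S. f (\<phi> g y)) / card S) \<longlongrightarrow> f w) F"
      using average[of S f] L_eval by simp
  qed
qed

lemma average_gt_imp_pos:
  fixes a :: "'a \<Rightarrow> real"
  assumes S: "finite S" and le1: "\<And>y. y \<in> S \<Longrightarrow> a y \<le> 1"
    and avg: "1 - 1 / card S < (\<Sum>y\<in>S. a y) / card S" and y: "y \<in> S"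
  shows "a y > 0"
proof (rule ccontr)
  assume "\<not> a y > 0"
  have card: "real (card S) > 0" using S y card_gt_0_iff by fastforce
  have "(\<Sum>y\<in>S. a y) = a y + (\<Sum>y\<in>S - {y}. a y)"
    using S y by (simp add: sum.remove)
  also have "\<dots> \<le> 0 + real (card (S - {y}))"
    using \<open>\<not> a y > 0\<close> sum_bounded_above[of "S - {y}" a 1] le1 by fastforce
  also have "\<dots> = real (card S) - 1"
    using S y card by (simp add: of_nat_diff)
  finally have "(\<Sum>y\<in>S. a y) / card S \<le> (real (card S) - 1) / card S"
    using card by (simp add: divide_right_mono)
  also have "\<dots> = 1 - 1 / card S"
    using card by (simp add: field_simps)
  finally show False using avg by simp
qed

lemma Urysohn_bump_function:
  fixes w :: "'x::t2_space"
  assumes "compact (UNIV::'x set)" "open V" "w \<in> V"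
  obtains f :: "'x \<Rightarrow> real"
    where "continuous_on UNIV f" "f w = 1" "\<And>y. y \<notin> V \<Longrightarrow> f y = 0" "\<And>y. f y \<le> 1"
proof -
  have "Hausdorff_space (euclidean :: 'x topology)"
    unfolding Hausdorff_space_def disjnt_def using hausdorff by auto
  then have "normal_space (euclidean :: 'x topology)"
    using assms(1) by (auto simp: compact_space_def intro: compact_Hausdorff_or_regular_imp_normal_space)
  then obtain f where f: "continuous_map euclidean (top_of_set {0..1::real}) f"
    "f ` (- V) \<subseteq> {0}" "f ` {w} \<subseteq> {1}"
    using Urysohn_lemma[of euclidean "- V" "{w}" 0 1] assms by (auto simp: disjnt_def)
  show ?thesis
  proof
    show "continuous_on UNIV f" "\<And>y. f y \<le> 1"
      using f(1) by (auto simp: continuous_map_in_subtopology)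
    show "f w = 1" "\<And>y. y \<notin> V \<Longrightarrow> f y = 0"
      using f(2,3) by auto
  qed
qed

lemma G_boundary_group_action: "G_boundary G \<phi> \<Longrightarrow> group_action G UNIV \<phi>"
  by (simp add: G_boundary_def continuous_action_def)

lemma G_boundary_moves_finite_set_into_open:
  fixes \<phi> :: "'g \<Rightarrow> 'x::t2_space \<Rightarrow> 'x"
  assumes B: "G_boundary G \<phi>" and U: "open U" "U \<noteq> {}" and S: "finite S" "S \<noteq> {}"
  obtains g where "g \<in> carrier G" "\<phi> g ` S \<subseteq> U"
proof -
  interpret group_action G UNIV \<phi> using B by (rule G_boundary_group_action)
  have compact: "compact (UNIV :: 'x set)" and minimal: "minimal_action G \<phi>"
    and proximal: "strongly_proximal G \<phi>"
    and cont: "\<And>g. g \<in> carrier G \<Longrightarrow> continuous_on UNIV (\<phi> g)"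
    using B by (auto simp: G_boundary_def continuous_action_def)
  obtain F w where F: "F \<noteq> bot" and carrier: "eventually (\<lambda>g. g \<in> carrier G) F"
    and lim: "\<And>f. continuous_on UNIV f \<Longrightarrow> ((\<lambda>g. (\<Sum>y\<in>S. f (\<phi> g y)) / card S) \<longlongrightarrow> f w) F"
    using strongly_proximal_averages_tendsto_point[OF compact proximal cont S] by blast
  have "U \<inter> orbit G \<phi> w \<noteq> {}"
    using minimal U open_Int_closure_eq_empty[of U "orbit G \<phi> w"] by (auto simp: minimal_action_def)
  then obtain h where h: "h \<in> carrier G" "\<phi> h w \<in> U" by (auto simp: orbit_def)
  define V where "V = \<phi> h -` U"
  have "open V" "w \<in> V" using h U cont[OF h(1)] open_vimage by (auto simp: V_def)
  then obtain f :: "'x \<Rightarrow> real" where f: "continuous_on UNIV f" "f w = 1"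
    "\<And>y. y \<notin> V \<Longrightarrow> f y = 0" "\<And>y. f y \<le> 1"
    using Urysohn_bump_function[OF compact] by blast
  have "1 - 1 / card S < (1::real)" using S by (simp add: card_gt_0_iff)
  then have "\<forall>\<^sub>F g in F. 1 - 1 / card S < (\<Sum>y\<in>S. f (\<phi> g y)) / card S"
    using lim[OF f(1)] f(2) by (simp add: order_tendstoD(1))
  then obtain g where g: "g \<in> carrier G" and avg: "1 - 1 / card S < (\<Sum>y\<in>S. f (\<phi> g y)) / card S"
    using eventually_happens[OF eventually_conj[OF carrier]] F by blast
  have "\<phi> g y \<in> V" if "y \<in> S" for y
    using average_gt_imp_pos[OF S(1) f(4) avg that] f(3) by force
  then have "\<phi> (h \<otimes>\<^bsub>G\<^esub> g) ` S \<subseteq> U"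
    using composition_rule[OF _ h(1) g] by (auto simp: V_def)
  then show ?thesis using that h(1) g by blast
qed

lemma G_boundary_pointwise_stabilizer_nontrivial:
  fixes \<phi> :: "'g \<Rightarrow> 'x::t2_space \<Rightarrow> 'x"
  assumes B: "G_boundary G \<phi>" and "\<not> topologically_free G \<phi>" and Y: "finite Y"
  shows "pointwise_stabilizer G \<phi> Y \<noteq> {\<one>\<^bsub>G\<^esub>}"
proof
  interpret group_action G UNIV \<phi> using B by (rule G_boundary_group_action)
  assume trivial: "pointwise_stabilizer G \<phi> Y = {\<one>\<^bsub>G\<^esub>}"
  obtain s where s: "s \<in> carrier G" "s \<noteq> \<one>\<^bsub>G\<^esub>" and U: "interior {x. \<phi> s x = x} \<noteq> {}"
    using assms(2) by (auto simp: topologically_free_def)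
  show False
  proof (cases "Y = {}")
    case True
    then show False using trivial s by (simp add: pointwise_stabilizer_def)
  next
    case False
    then obtain g where g: "g \<in> carrier G" "\<phi> g ` Y \<subseteq> interior {x. \<phi> s x = x}"
      using G_boundary_moves_finite_set_into_open[OF B open_interior U Y] by blast
    then have "s \<in> pointwise_stabilizer G \<phi> (\<phi> g ` Y)"
      using s(1) interior_subset by (fastforce simp: pointwise_stabilizer_def)
    also have "\<dots> = g <#\<^bsub>G\<^esub> {\<one>\<^bsub>G\<^esub>} #>\<^bsub>G\<^esub> inv\<^bsub>G\<^esub> g"
      using pointwise_stabilizer_image[OF g(1)] trivial by simp
    also have "\<dots> = {\<one>\<^bsub>G\<^esub>}"
      using g(1) by (simp add: l_coset_def r_coset_def)
    finally show False using s(2) by simp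
  qed
qed

lemma G_boundary_pointwise_stabilizer_infinite:
  fixes \<phi> :: "'g \<Rightarrow> 'x::t2_space \<Rightarrow> 'x"
  assumes B: "G_boundary G \<phi>" and "\<not> topologically_free G \<phi>"
    and no_finite_normal: "\<forall>N. N \<lhd> G \<and> finite N \<longrightarrow> N = {\<one>\<^bsub>G\<^esub>}"
    and Y: "finite Y" "Y \<subseteq> orbit G \<phi> x"
  shows "infinite (pointwise_stabilizer G \<phi> Y)"
proof
  interpret group_action G UNIV \<phi> using B by (rule G_boundary_group_action)
  assume "finite (pointwise_stabilizer G \<phi> Y)"
  then obtain Y' where Y': "finite Y'" "Y \<subseteq> Y'"
    and orbit: "pointwise_stabilizer G \<phi> Y' = pointwise_stabilizer G \<phi> (orbit G \<phi> x)"
    using pointwise_stabilizer_finite_subset[OF Y] by metis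
  have "pointwise_stabilizer G \<phi> (orbit G \<phi> x) \<lhd> G"
    by (rule pointwise_stabilizer_orbit_normal) simp
  moreover have "finite (pointwise_stabilizer G \<phi> (orbit G \<phi> x))"
    using \<open>finite (pointwise_stabilizer G \<phi> Y)\<close> pointwise_stabilizer_antimono[OF Y'(2)] orbit
    by (metis finite_subset)
  ultimately have "pointwise_stabilizer G \<phi> Y' = {\<one>\<^bsub>G\<^esub>}"
    using no_finite_normal orbit by simp
  then show False
    using G_boundary_pointwise_stabilizer_nontrivial[OF assms(1,2) Y'(1)] by simp
qed

theorem lemma2p11:
  fixes G :: "('g, 'm) monoid_scheme" and \<phi> :: "'g \<Rightarrow> 'x::t2_space \<Rightarrow> 'x"
  assumes "G_boundary G \<phi>"
    and "\<not> topologically_free G \<phi>"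
  shows "(\<forall>(x::'x) (n::nat) (t::nat \<Rightarrow> 'g). n \<ge> 1 \<longrightarrow> t ` {1..n} \<subseteq> carrier G \<longrightarrow>
           (\<Inter>i\<in>{1..n}. (t i <#\<^bsub>G\<^esub> stabilizer G \<phi> x) #>\<^bsub>G\<^esub> inv\<^bsub>G\<^esub> (t i)) \<noteq> {\<one>\<^bsub>G\<^esub>})
       \<and> ((\<forall>N. N \<lhd> G \<and> finite N \<longrightarrow> N = {\<one>\<^bsub>G\<^esub>}) \<longrightarrow>
         (\<forall>(x::'x) (n::nat) (t::nat \<Rightarrow> 'g). n \<ge> 1 \<longrightarrow> t ` {1..n} \<subseteq> carrier G \<longrightarrow>
           infinite (\<Inter>i\<in>{1..n}. (t i <#\<^bsub>G\<^esub> stabilizer G \<phi> x) #>\<^bsub>G\<^esub> inv\<^bsub>G\<^esub> (t i))))"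
proof -
  interpret group_action G UNIV \<phi> using assms(1) by (rule G_boundary_group_action)
  have conjugates: "(\<Inter>i\<in>{1..n}. t i <#\<^bsub>G\<^esub> stabilizer G \<phi> x #>\<^bsub>G\<^esub> inv\<^bsub>G\<^esub> (t i))
      = pointwise_stabilizer G \<phi> ((\<lambda>i. \<phi> (t i) x) ` {1..n})"
    if "n \<ge> 1" "t ` {1..n} \<subseteq> carrier G" for x :: 'x and n :: nat and t
    by (intro INT_conjugate_stabilizers) (use that in auto)
  have orbit: "(\<lambda>i. \<phi> (t i) x) ` {1..n} \<subseteq> orbit G \<phi> x" if "t ` {1..n} \<subseteq> carrier G" for x :: 'x and n :: nat and t
    using that by (auto simp: orbit_def)
  show ?thesis
  proof (intro conjI allI impI)
    fix x :: 'x and n :: nat and t :: "nat \<Rightarrow> 'g"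
    assume n: "n \<ge> 1" and t: "t ` {1..n} \<subseteq> carrier G"
    show "(\<Inter>i\<in>{1..n}. t i <#\<^bsub>G\<^esub> stabilizer G \<phi> x #>\<^bsub>G\<^esub> inv\<^bsub>G\<^esub> (t i)) \<noteq> {\<one>\<^bsub>G\<^esub>}"
      using G_boundary_pointwise_stabilizer_nontrivial[OF assms] conjugates[OF n t] by simp
  next
    fix x :: 'x and n :: nat and t :: "nat \<Rightarrow> 'g"
    assume no_finite_normal: "\<forall>N. N \<lhd> G \<and> finite N \<longrightarrow> N = {\<one>\<^bsub>G\<^esub>}"
      and n: "n \<ge> 1" and t: "t ` {1..n} \<subseteq> carrier G"
    show "infinite (\<Inter>i\<in>{1..n}. t i <#\<^bsub>G\<^esub> stabilizer G \<phi> x #>\<^bsub>G\<^esub> inv\<^bsub>G\<^esub> (t i))"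
      using G_boundary_pointwise_stabilizer_infinite[OF assms no_finite_normal _ orbit[OF t]] conjugates[OF n t]
      by simp
  qed
qed

end
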